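(* Let $P=(Q,I,M,\Delta)$ be a broadcast protocol, $F\subseteq Q$, and $S$ the set of states returned by the saturation algorithm on $P$. If $F\cap S\neq\emptyset$, then there exists a lossy execution $\rho$ covering $F$ with at most $2|Q|$ nodes and length at most $2|Q|^2$.
   Context: A broadcast protocol is a tuple $P=(Q,I,M,\Delta)$ where $Q$ is a finite set of states, $I\subseteq Q$ initial states, $M$ a finite message alphabet and $\Delta\subseteq Q\times\{!!m,\ ??m \mid m\in M\}\times Q$ ($!!m$ = broadcast, $??m$ = reception). Protocols are complete for receptions: for every $q$, $m$ there is $q'$ with $(q,??m,q')\in\Delta$. A configuration is a finite undirected graph $\gamma=(V,E,L)$, $E$ symmetric irreflexive, $L:V\to Q$; $L(\gamma)=L(V)$; $\gamma$ is initial if $L(V)\subseteq I$. A lossy step goes from $\gamma=(V,E,L)$ to $\gamma'=(V,E,L')$ (same nodes and edges) if there exist a node $v$ and $m\in M$ with $(L(v),!!m,L'(v))\in\Delta$ and either (a) $L'(v')=L(v')$ for all $v'\neq v$ (lost broadcast), or (b) for every $v'\neq v$: if $v'$ is a neighbour of $v$ then $(L(v'),??m,L'(v'))\in\Delta$, otherwise $L'(v')=L(v')$ (successful broadcast). A lossy execution is a sequence $\gamma_0,\dots,\gamma_r$ with $\gamma_0$ initial and consecutive lossy steps; its number of nodes is $|V|$, its length is $r$, and it covers $F$ if $L(\gamma_r)\cap F\neq\emptyset$. The saturation algorithm: start with $S:=I$, $c:=|I|$; repeat: if there is $(q_1,!!m,q_2)\in\Delta$ with $q_1\in S$, $q_2\notin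 S$, add $q_2$ to $S$ and $c:=c+1$; else if there are $(q_1,!!m,q_2),(q_1',??m,q_2')\in\Delta$ with $q_1,q_2,q_1'\in S$, $q_2'\notin S$, add $q_2'$ and $c:=c+2$; else stop and return $S$. *)

theory Defs
  imports Main
begin

datatype 'm action = Bcast 'm | Recv 'm

definition broadcast_protocol ::
  "'q set \<Rightarrow> 'q set \<Rightarrow> 'm set \<Rightarrow> ('q \<times> 'm action \<times> 'q) set \<Rightarrow> bool" where
  "broadcast_protocol Q I M \<Delta> \<longleftrightarrow>
     finite Q \<and> I \<subseteq> Q \<and> finite M \<and>
     (\<forall>(q, a, q') \<in> \<Delta>. q \<in> Q \<and> q' \<in> Q \<and> (\<exists>m\<in>M. a = Bcast m \<or> a = Recv m)) \<and>
     (\<forall>q\<in>Q. \<forall>m\<in>M. \<exists>q'. (q, Recv m, q') \<in> \<Delta>)"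

definition graph_ok :: "'v set \<Rightarrow> ('v \<times> 'v) set \<Rightarrow> bool" where
  "graph_ok V E \<longleftrightarrow> finite V \<and> E \<subseteq> V \<times> V \<and> sym E \<and> irrefl E"

definition lossy_step ::
  "'m set \<Rightarrow> ('q \<times> 'm action \<times> 'q) set \<Rightarrow> 'v set \<Rightarrow> ('v \<times> 'v) set \<Rightarrow>
   ('v \<Rightarrow> 'q) \<Rightarrow> ('v \<Rightarrow> 'q) \<Rightarrow> bool" where
  "lossy_step M \<Delta> V E L L' \<longleftrightarrow>
     (\<exists>v\<in>V. \<exists>m\<in>M. (L v, Bcast m, L' v) \<in> \<Delta> \<and>
        ((\<forall>v'\<in>V. v' \<noteq> v \<longrightarrow> L' v' = L v') \<or>
         (\<forall>v'\<in>V. v' \<noteq> v \<longrightarrow>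
            ((v, v') \<in> E \<longrightarrow> (L v', Recv m, L' v') \<in> \<Delta>) \<and>
            ((v, v') \<notin> E \<longrightarrow> L' v' = L v'))))"

text \<open>A lossy execution gamma_0, ..., gamma_r on graph (V, E), given as the list of
labellings [L_0, ..., L_r]; its length is r = length Ls - 1, its number of nodes card V.\<close>
definition lossy_execution ::
  "'q set \<Rightarrow> 'q set \<Rightarrow> 'm set \<Rightarrow> ('q \<times> 'm action \<times> 'q) set \<Rightarrow>
   'v set \<Rightarrow> ('v \<times> 'v) set \<Rightarrow> ('v \<Rightarrow> 'q) list \<Rightarrow> bool" where
  "lossy_execution Q I M \<Delta> V E Ls \<longleftrightarrow>
     graph_ok V E \<and> Ls \<noteq> [] \<and>
     (\<forall>L\<in>set Ls. L ` V \<subseteq> Q) \<and>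
     hd Ls ` V \<subseteq> I \<and>
     (\<forall>i. Suc i < length Ls \<longrightarrow> lossy_step M \<Delta> V E (Ls ! i) (Ls ! Suc i))"

definition covers :: "'v set \<Rightarrow> ('v \<Rightarrow> 'q) list \<Rightarrow> 'q set \<Rightarrow> bool" where
  "covers V Ls F \<longleftrightarrow> last Ls ` V \<inter> F \<noteq> {}"

text \<open>One step of the saturation algorithm (the counter c is irrelevant for S).\<close>
definition sat_step :: "('q \<times> 'm action \<times> 'q) set \<Rightarrow> 'q set \<Rightarrow> 'q set \<Rightarrow> bool" where
  "sat_step \<Delta> S S' \<longleftrightarrow>
     (\<exists>q1 m q2. (q1, Bcast m, q2) \<in> \<Delta> \<and> q1 \<in> S \<and> q2 \<notin> S \<and> S' = insert q2 S)
   \<or> ((\<nexists>q1 m q2. (q1, Bcast m, q2) \<in> \<Delta> \<and> q1 \<in> S \<and> q2 \<notin> S) \<and>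
      (\<exists>q1 m q2 q1' q2'. (q1, Bcast m, q2) \<in> \<Delta> \<and> (q1', Recv m, q2') \<in> \<Delta> \<and>
          q1 \<in> S \<and> q2 \<in> S \<and> q1' \<in> S \<and> q2' \<notin> S \<and> S' = insert q2' S))"

definition saturation_result :: "'q set \<Rightarrow> ('q \<times> 'm action \<times> 'q) set \<Rightarrow> 'q set \<Rightarrow> bool" where
  "saturation_result I \<Delta> S \<longleftrightarrow> (sat_step \<Delta>)\<^sup>*\<^sup>* I S \<and> (\<nexists>S'. sat_step \<Delta> S S')"

end

theory Submission
  imports Defs
begin

(* Induction along the run of the saturation algorithm, for a stronger statement: for every finite
   set D of designated nodes and every assignment d of states of the n-th saturation set to them,
   one lossy execution on at most |D| + n nodes and of length at most 1 + n (|D| + n) ends with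
   every v in D in state d v.  Moreover D is independent in the graph, and the execution stays valid
   when arbitrary edges inside D are added, since designated nodes never broadcast successfully.
   A saturation step p --!!m--> s is realised by lost broadcasts of the nodes that must end in s.
   A step c --??m--> s, enabled by a --!!m--> b, uses one more designated node h, driven to a;
   h is then joined to the nodes waiting in c and broadcasts m.  A single designated node and
   n \<le> |Q| give at most 1 + n \<le> 2|Q| nodes and n (1 + n) \<le> 2|Q|^2 steps. *)

lemma sat_step_cases:
  assumes "sat_step \<Delta> S0 S"
  obtains p m s where "(p, Bcast m, s) \<in> \<Delta>" "p \<in> S0" "S = insert s S0"
  | a m b c s where "(a, Bcast m, b) \<in> \<Delta>" "(c, Recv m, s) \<in> \<Delta>" "a \<in> S0" "c \<in> S0"
      "S = insert s S0"
  using assms unfolding sat_step_def by blast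

lemma successively_append_last:
  assumes "successively P xs" "successively P (last xs # ys)" "xs \<noteq> []"
  shows "successively P (xs @ ys)"
  using assms by (cases ys) (auto simp: successively_append_iff successively_Cons)

lemma lossy_step_lost:
  assumes "v \<in> V" "m \<in> M" "(L v, Bcast m, q) \<in> \<Delta>"
  shows "lossy_step M \<Delta> V E L (L(v := q))"
  unfolding lossy_step_def using assms by force

lemma lossy_step_success:
  assumes "v \<in> V" "m \<in> M" "(L v, Bcast m, L' v) \<in> \<Delta>"
    and "\<forall>w\<in>V - {v}. if (v, w) \<in> E then (L w, Recv m, L' w) \<in> \<Delta> else L' w = L w"
  shows "lossy_step M \<Delta> V E L L'"
  unfolding lossy_step_def using assms by fastforce

lemma graph_ok_add_star:
  assumes "graph_ok V E" "h \<in> V" "X \<subseteq> V" "h \<notin> X"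
  shows "graph_ok V (E \<union> ({h} \<times> X \<union> X \<times> {h}))"
  using assms unfolding graph_ok_def sym_def irrefl_def by auto

lemma lost_broadcasts:
  assumes "finite X" "X \<subseteq> V" "\<forall>v\<in>X. L v = p" "(p, Bcast m, s) \<in> \<Delta>" "m \<in> M"
  shows "\<exists>ys. length ys = card X \<and> last (L # ys) = (\<lambda>v. if v \<in> X then s else L v) \<and>
           (\<forall>L'\<in>set ys. L' ` V \<subseteq> insert s (L ` V)) \<and>
           (\<forall>E. successively (lossy_step M \<Delta> V E) (L # ys))"
  using assms(1-3)
proof (induction X rule: finite_induct)
  case empty
  show ?case by (intro exI[of _ "[]"]) auto
next
  case (insert x X)
  then obtain ys where ys: "length ys = card X" "last (L # ys) = (\<lambda>v. if v \<in> X then s else L v)"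
      "\<forall>L'\<in>set ys. L' ` V \<subseteq> insert s (L ` V)" "\<forall>E. successively (lossy_step M \<Delta> V E) (L # ys)"
    by auto
  let ?L' = "(last (L # ys))(x := s)"
  have L': "?L' = (\<lambda>v. if v \<in> insert x X then s else L v)"
    using ys(2) by auto
  have "lossy_step M \<Delta> V E (last (L # ys)) ?L'" for E
    using insert assms(4,5) ys(2) by (intro lossy_step_lost) auto
  then have "successively (lossy_step M \<Delta> V E) (L # ys @ [?L'])" for E
    using ys(4) by (simp add: successively_append_iff flip: append_Cons)
  moreover have "\<forall>L'\<in>set (ys @ [?L']). L' ` V \<subseteq> insert s (L ` V)"
    using ys(3) unfolding L' by auto
  moreover have "length (ys @ [?L']) = card (insert x X)"
    using insert ys(1) by simp
  moreover have "last (L # ys @ [?L']) = (\<lambda>v. if v \<in> insert x X then s else L v)"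
    using L' by simp
  ultimately show ?case
    by blast
qed

context
  fixes Q I :: "'q set" and M :: "'m set" and \<Delta> :: "('q \<times> 'm action \<times> 'q) set"
  assumes protocol: "broadcast_protocol Q I M \<Delta>"
begin

lemma transition_states: "(q, a, q') \<in> \<Delta> \<Longrightarrow> q \<in> Q \<and> q' \<in> Q"
  using protocol unfolding broadcast_protocol_def by blast

lemma broadcast_message: "(q, Bcast m, q') \<in> \<Delta> \<Longrightarrow> m \<in> M"
  using protocol unfolding broadcast_protocol_def by fastforce

lemma broadcast_to_neighbours:
  assumes "L ` V \<subseteq> Q" "h \<in> V" "(L h, Bcast m, b) \<in> \<Delta>" "\<forall>v\<in>X. (L v, Recv m, s) \<in> \<Delta>"
  obtains L' where "L' ` V \<subseteq> Q" "L' h = b" "\<forall>v\<in>X - {h}. L' v = s"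
    "\<forall>v. v \<notin> insert h (N \<union> X) \<longrightarrow> L' v = L v"
    "\<And>E. E `` {h} = N \<union> X \<Longrightarrow> lossy_step M \<Delta> V E L L'"
proof -
  have "m \<in> M"
    using broadcast_message[OF assms(3)] .
  then have "\<forall>v\<in>V. \<exists>q'. (L v, Recv m, q') \<in> \<Delta>"
    using assms(1) protocol unfolding broadcast_protocol_def by blast
  then obtain rcv where rcv: "\<forall>v\<in>V. (L v, Recv m, rcv v) \<in> \<Delta>"
    by metis
  define L' where "L' = (\<lambda>v. if v = h then b else if v \<in> X then s else if v \<in> N then rcv v else L v)"
  have "L' ` V \<subseteq> Q"
    using assms rcv transition_states unfolding L'_def by (auto 0 3)
  moreover have "lossy_step M \<Delta> V E L L'" if "E `` {h} = N \<union> X" for E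
    using assms(2-4) \<open>m \<in> M\<close> rcv that by (intro lossy_step_success) (auto simp: L'_def)
  ultimately show ?thesis
    by (intro that[of L']) (auto simp: L'_def)
qed

lemma card_sat_steps:
  assumes "(sat_step \<Delta> ^^ n) I S"
  shows "S \<subseteq> Q \<and> card S = card I + n"
  using assms
proof (induction n arbitrary: S)
  case 0
  then show ?case
    using protocol unfolding broadcast_protocol_def by auto
next
  case (Suc n)
  then obtain S0 where "(sat_step \<Delta> ^^ n) I S0" "sat_step \<Delta> S0 S" by auto
  moreover from \<open>sat_step \<Delta> S0 S\<close> obtain q where "q \<in> Q" "q \<notin> S0" "S = insert q S0"
    unfolding sat_step_def using transition_states by blast
  moreover have "finite Q"
    using protocol unfolding broadcast_protocol_def by blast
  ultimately show ?case
    using Suc.IH finite_subset by fastforce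
qed

definition realizes_targets ::
  "'v set \<Rightarrow> ('v \<times> 'v) set \<Rightarrow> ('v \<Rightarrow> 'q) list \<Rightarrow> 'v set \<Rightarrow> ('v \<Rightarrow> 'q) \<Rightarrow> bool" where
  "realizes_targets V E Ls D d \<longleftrightarrow>
     graph_ok V E \<and> Ls \<noteq> [] \<and> (\<forall>L\<in>set Ls. L ` V \<subseteq> Q) \<and> hd Ls ` V \<subseteq> I \<and>
     D \<subseteq> V \<and> E \<inter> D \<times> D = {} \<and> (\<forall>v\<in>D. last Ls v = d v) \<and>
     (\<forall>R \<subseteq> D \<times> D. successively (lossy_step M \<Delta> V (E \<union> R)) Ls)"

lemma realizes_targets_lossy_execution:
  "realizes_targets V E Ls D d \<Longrightarrow> lossy_execution Q I M \<Delta> V E Ls"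
  unfolding realizes_targets_def lossy_execution_def
  by (metis Un_empty_right empty_subsetI successively_conv_nth)

lemma realizes_targets_final:
  "realizes_targets V E Ls D d \<Longrightarrow> v \<in> D \<Longrightarrow> v \<in> V \<and> last Ls v = d v"
  unfolding realizes_targets_def by blast

lemma realizes_targets_initial:
  assumes "finite D" "d ` D \<subseteq> I"
  shows "realizes_targets D {} [d] D d"
  using assms protocol
  unfolding realizes_targets_def graph_ok_def broadcast_protocol_def by (auto simp: sym_def irrefl_def)

lemma realizes_targets_broadcast:
  assumes run: "realizes_targets V E Ls D d0" and "finite D" and p_s: "(p, Bcast m, s) \<in> \<Delta>"
    and targets: "\<forall>v\<in>D. d v = d0 v \<or> (d0 v = p \<and> d v = s)"
  shows "\<exists>ys. length ys \<le> card D \<and> realizes_targets V E (Ls @ ys) D d"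
proof -
  from run have "Ls \<noteq> []" and states: "\<forall>L\<in>set Ls. L ` V \<subseteq> Q" and "D \<subseteq> V"
    and final: "\<forall>v\<in>D. last Ls v = d0 v"
    and robust: "\<forall>R \<subseteq> D \<times> D. successively (lossy_step M \<Delta> V (E \<union> R)) Ls"
    by (simp_all add: realizes_targets_def)
  define X where "X = {v\<in>D. d v \<noteq> d0 v}"
  have X: "finite X" "X \<subseteq> V" "\<forall>v\<in>X. last Ls v = p"
    using \<open>finite D\<close> \<open>D \<subseteq> V\<close> final targets unfolding X_def by auto
  obtain ys where ys: "length ys = card X" "last (last Ls # ys) = (\<lambda>v. if v \<in> X then s else last Ls v)"
      "\<forall>L'\<in>set ys. L' ` V \<subseteq> insert s (last Ls ` V)"
      "\<forall>E. successively (lossy_step M \<Delta> V E) (last Ls # ys)"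
    using lost_broadcasts[OF X p_s broadcast_message[OF p_s]] by blast
  have "last (Ls @ ys) = last (last Ls # ys)"
    by (cases ys) auto
  also have "\<dots> = (\<lambda>v. if v \<in> X then s else last Ls v)"
    by (fact ys(2))
  finally have "\<forall>v\<in>D. last (Ls @ ys) v = d v"
    using final targets unfolding X_def by auto
  moreover have "\<forall>L\<in>set (Ls @ ys). L ` V \<subseteq> Q"
    using states ys(3) \<open>Ls \<noteq> []\<close> transition_states[OF p_s] by fastforce
  moreover have "\<forall>R \<subseteq> D \<times> D. successively (lossy_step M \<Delta> V (E \<union> R)) (Ls @ ys)"
    using robust ys(4) \<open>Ls \<noteq> []\<close> by (blast intro: successively_append_last)
  moreover have "card X \<le> card D"
    using \<open>finite D\<close> unfolding X_def by (intro card_mono) auto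
  ultimately show ?thesis
    using run ys(1) \<open>Ls \<noteq> []\<close> unfolding realizes_targets_def
    by (intro exI[of _ ys]) simp
qed

lemma realizes_targets_reception:
  assumes run: "realizes_targets V E Ls (insert h D) d0" and "h \<notin> D"
    and a_b: "(a, Bcast m, b) \<in> \<Delta>" and c_s: "(c, Recv m, s) \<in> \<Delta>" and "d0 h = a"
    and targets: "\<forall>v\<in>D. d v = d0 v \<or> (d0 v = c \<and> d v = s)"
  shows "\<exists>E' L'. realizes_targets V E' (Ls @ [L']) D d"
proof -
  from run have graph: "graph_ok V E" and "Ls \<noteq> []" and states: "\<forall>L\<in>set Ls. L ` V \<subseteq> Q"
    and init: "hd Ls ` V \<subseteq> I" and "h \<in> V" "D \<subseteq> V"
    and indep: "E \<inter> insert h D \<times> insert h D = {}"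
    and final: "\<forall>v\<in>insert h D. last Ls v = d0 v"
    and robust: "\<forall>R \<subseteq> insert h D \<times> insert h D. successively (lossy_step M \<Delta> V (E \<union> R)) Ls"
    by (simp_all add: realizes_targets_def)
  define X where "X = {v\<in>D. d v \<noteq> d0 v}"
  define E' where "E' = E \<union> ({h} \<times> X \<union> X \<times> {h})"
  have "X \<subseteq> V" "h \<notin> X"
    using \<open>D \<subseteq> V\<close> \<open>h \<notin> D\<close> unfolding X_def by auto
  have "last Ls ` V \<subseteq> Q" "(last Ls h, Bcast m, b) \<in> \<Delta>" "\<forall>v\<in>X. (last Ls v, Recv m, s) \<in> \<Delta>"
    using states \<open>Ls \<noteq> []\<close> final targets a_b c_s \<open>d0 h = a\<close> unfolding X_def by auto
  from broadcast_to_neighbours[OF this(1) \<open>h \<in> V\<close> this(2,3), where N = "E `` {h}"]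
  obtain L' where "L' ` V \<subseteq> Q" and L'_X: "\<forall>v\<in>X - {h}. L' v = s"
    and L'_rest: "\<forall>v. v \<notin> insert h (E `` {h} \<union> X) \<longrightarrow> L' v = last Ls v"
    and step: "\<And>E''. E'' `` {h} = E `` {h} \<union> X \<Longrightarrow> lossy_step M \<Delta> V E'' (last Ls) L'"
    by blast
  have "successively (lossy_step M \<Delta> V (E' \<union> R)) (Ls @ [L'])" if "R \<subseteq> D \<times> D" for R
  proof -
    have "E' \<union> R = E \<union> ({h} \<times> X \<union> X \<times> {h} \<union> R)"
      unfolding E'_def by blast
    moreover have "{h} \<times> X \<union> X \<times> {h} \<union> R \<subseteq> insert h D \<times> insert h D"
      using that unfolding X_def by blast
    ultimately have "successively (lossy_step M \<Delta> V (E' \<union> R)) Ls"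
      using robust by simp
    moreover have "(E' \<union> R) `` {h} = E `` {h} \<union> X"
      using that \<open>h \<notin> D\<close> \<open>h \<notin> X\<close> unfolding E'_def by blast
    ultimately show ?thesis
      using step \<open>Ls \<noteq> []\<close> by (simp add: successively_append_iff)
  qed
  moreover have "graph_ok V E'"
    unfolding E'_def using graph_ok_add_star[OF graph \<open>h \<in> V\<close> \<open>X \<subseteq> V\<close> \<open>h \<notin> X\<close>] .
  moreover have "L' v = d v" if "v \<in> D" for v
  proof (cases "v \<in> X")
    case True
    then show ?thesis
      using L'_X targets \<open>h \<notin> X\<close> unfolding X_def by auto
  next
    case False
    moreover have "(h, v) \<notin> E" "v \<noteq> h"
      using indep that \<open>h \<notin> D\<close> by auto
    ultimately show ?thesis
      using L'_rest final that unfolding X_def by auto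
  qed
  moreover have "E' \<inter> D \<times> D = {}"
    using indep \<open>h \<notin> D\<close> unfolding E'_def by blast
  ultimately show ?thesis
    using \<open>L' ` V \<subseteq> Q\<close> \<open>Ls \<noteq> []\<close> states init \<open>D \<subseteq> V\<close> unfolding realizes_targets_def
    by (intro exI[of _ E'] exI[of _ L']) simp
qed

lemma targets_realizable:
  assumes "(sat_step \<Delta> ^^ n) I S" and "finite D" and "d ` D \<subseteq> S"
  shows "\<exists>(V :: nat set) E Ls. realizes_targets V E Ls D d \<and>
           card V \<le> card D + n \<and> length Ls \<le> 1 + n * (card D + n)"
  using assms
proof (induction n arbitrary: S D d)
  case 0
  then have "realizes_targets D {} [d] D d"
    by (intro realizes_targets_initial) auto
  then show ?case
    by force
next
  case (Suc n)
  then obtain S0 where steps: "(sat_step \<Delta> ^^ n) I S0" and "sat_step \<Delta> S0 S"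
    by auto
  from \<open>sat_step \<Delta> S0 S\<close> show ?case
  proof (cases rule: sat_step_cases)
    case (1 p m s)
    define d0 where "d0 = (\<lambda>v. if d v = s then p else d v)"
    have "d0 ` D \<subseteq> S0"
      using Suc.prems 1 unfolding d0_def by auto
    then obtain V E Ls where run: "realizes_targets V E Ls D d0"
      and bounds: "card V \<le> card D + n" "length Ls \<le> 1 + n * (card D + n)"
      using Suc.IH[OF steps \<open>finite D\<close>] by blast
    have "\<forall>v\<in>D. d v = d0 v \<or> (d0 v = p \<and> d v = s)"
      unfolding d0_def by auto
    then obtain ys where "length ys \<le> card D" "realizes_targets V E (Ls @ ys) D d"
      using realizes_targets_broadcast[OF run \<open>finite D\<close> 1(1)] by blast
    with bounds show ?thesis
      by (intro exI[of _ V] exI[of _ E] exI[of _ "Ls @ ys"]) auto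
  next
    case (2 a m b c s)
    obtain h :: nat where "h \<notin> D"
      using \<open>finite D\<close> ex_new_if_finite infinite_UNIV_nat by blast
    define d0 where "d0 = (\<lambda>v. if v = h then a else if d v = s then c else d v)"
    have "d0 ` insert h D \<subseteq> S0"
      using Suc.prems 2 unfolding d0_def by auto
    then obtain V E Ls where run: "realizes_targets V E Ls (insert h D) d0"
      and bounds: "card V \<le> card (insert h D) + n" "length Ls \<le> 1 + n * (card (insert h D) + n)"
      using Suc.IH[OF steps] \<open>finite D\<close> by blast
    have "\<forall>v\<in>D. d v = d0 v \<or> (d0 v = c \<and> d v = s)"
      using \<open>h \<notin> D\<close> unfolding d0_def by auto
    moreover have "d0 h = a"
      unfolding d0_def by simp
    ultimately obtain E' L' where "realizes_targets V E' (Ls @ [L']) D d"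
      using realizes_targets_reception[OF run \<open>h \<notin> D\<close> 2(1,2)] by blast
    moreover have "card (insert h D) = Suc (card D)"
      using \<open>finite D\<close> \<open>h \<notin> D\<close> by simp
    ultimately show ?thesis
      using bounds by (intro exI[of _ V] exI[of _ E'] exI[of _ "Ls @ [L']"]) auto
  qed
qed


lemma saturation_state_coverable:
  assumes "(sat_step \<Delta> ^^ n) I S" and "q \<in> S"
  shows "\<exists>(V :: nat set) E Ls. lossy_execution Q I M \<Delta> V E Ls \<and> q \<in> last Ls ` V \<and>
           card V \<le> 1 + n \<and> length Ls \<le> 1 + n * (1 + n)"
proof -
  obtain V E Ls where run: "realizes_targets V E Ls {0 :: nat} (\<lambda>_. q)"
    and "card V \<le> 1 + n" "length Ls \<le> 1 + n * (1 + n)"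
    using targets_realizable[OF assms(1), of "{0}" "\<lambda>_. q"] \<open>q \<in> S\<close> by auto
  moreover have "q \<in> last Ls ` V"
    using realizes_targets_final[OF run, of 0] by force
  ultimately show ?thesis
    using realizes_targets_lossy_execution[OF run] by blast
qed

end

theorem theorem3p5:
  fixes Q I :: "'q set" and M :: "'m set" and \<Delta> :: "('q \<times> 'm action \<times> 'q) set"
    and F S :: "'q set"
  assumes "broadcast_protocol Q I M \<Delta>"
    and "F \<subseteq> Q"
    and "saturation_result I \<Delta> S"
    and "F \<inter> S \<noteq> {}"
  shows "\<exists>(V :: nat set) E Ls.
           lossy_execution Q I M \<Delta> V E Ls \<and> covers V Ls F \<and>
           card V \<le> 2 * card Q \<and> length Ls - 1 \<le> 2 * card Q ^ 2"
proof -
  obtain n where steps: "(sat_step \<Delta> ^^ n) I S"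
    using assms(3) by (auto simp: saturation_result_def rtranclp_power)
  obtain q where "q \<in> F" "q \<in> S"
    using assms(4) by blast
  obtain V :: "nat set" and E Ls where "lossy_execution Q I M \<Delta> V E Ls" "q \<in> last Ls ` V"
    and "card V \<le> 1 + n" "length Ls \<le> 1 + n * (1 + n)"
    using saturation_state_coverable[OF assms(1) steps \<open>q \<in> S\<close>] by blast
  moreover have "n \<le> card Q" "1 \<le> card Q"
    using card_sat_steps[OF assms(1) steps] assms(1) \<open>q \<in> S\<close> card_mono[of Q S]
    by (auto simp: broadcast_protocol_def Suc_le_eq card_gt_0_iff)
  moreover from this have "n * (1 + n) \<le> 2 * card Q ^ 2"
    using mult_mono[of n "card Q" "1 + n" "2 * card Q"] by (simp add: power2_eq_square)
  ultimately show ?thesis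
    using \<open>q \<in> F\<close> unfolding covers_def by (intro exI[of _ V] exI[of _ E] exI[of _ Ls]) auto
qed

end
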